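(* $N[k]=N[\bar k]+N[k^\perp]$, where for measurable $j:\mathcal{X}\times\mathcal{X}\to\mathbb{R}$, $N[j]=\int_\mathcal{X}\int_\mathcal{X}j(x,y)^2\,d\mu(x)\,d\mu(y)$, $\bar k(x,y)=\int_\mathcal{G}k(x,gy)\,d\lambda(g)$ and $k^\perp=k-\bar k$.
   Context: $\mathcal{G}$ is a compact, second countable, Hausdorff topological group with Haar probability measure $\lambda$, acting measurably on a nonempty Polish space $\mathcal{X}$; $\mu$ is a $\mathcal{G}$-invariant Borel probability measure on $\mathcal{X}$ with $\mathrm{supp}\,\mu=\mathcal{X}$. $k:\mathcal{X}\times\mathcal{X}\to\mathbb{R}$ is a measurable symmetric positive definite kernel with $k(\cdot,x)$ continuous for all $x$ and $\sup_xk(x,x)<\infty$. *)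

theory Defs
  imports "HOL-Analysis.Analysis" "HOL-Probability.Probability"
begin

text \<open>The group G is modelled as a type 'g carrying a (not necessarily commutative)
group structure, written additively (class group_add), with a topology making it a
topological group (class topological_group_add).\<close>

definition compact_group :: "'g::{topological_group_add, t2_space, second_countable_topology} itself \<Rightarrow> bool" where
  "compact_group _ \<longleftrightarrow> compact (UNIV :: 'g set)"

definition haar_prob :: "'g::topological_group_add measure \<Rightarrow> bool" where
  "haar_prob lam \<longleftrightarrow> sets lam = sets borel \<and> prob_space lam \<and>
     (\<forall>g. \<forall>A\<in>sets borel. emeasure lam ((\<lambda>h. g + h) ` A) = emeasure lam A)"

definition measurable_action :: "('g::topological_group_add \<Rightarrow> 'x::topological_space \<Rightarrow> 'x) \<Rightarrow> bool" where
  "measurable_action act \<longleftrightarrow>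
     (\<forall>x. act 0 x = x) \<and> (\<forall>g h x. act (g + h) x = act g (act h x)) \<and>
     (\<lambda>(g, x). act g x) \<in> measurable (borel \<Otimes>\<^sub>M borel) borel"

definition invariant_full_support_prob ::
    "('g \<Rightarrow> 'x::topological_space \<Rightarrow> 'x) \<Rightarrow> 'x measure \<Rightarrow> bool" where
  "invariant_full_support_prob act mu \<longleftrightarrow> sets mu = sets borel \<and> prob_space mu \<and>
     (\<forall>g. \<forall>A\<in>sets borel. emeasure mu (act g -` A) = emeasure mu A) \<and>
     (\<forall>U. open U \<and> U \<noteq> {} \<longrightarrow> emeasure mu U > 0)"

definition pd_kernel :: "('x \<Rightarrow> 'x \<Rightarrow> real) \<Rightarrow> bool" where
  "pd_kernel k \<longleftrightarrow> (\<forall>x y. k x y = k y x) \<and>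
     (\<forall>(n::nat) (c::nat \<Rightarrow> real) (x::nat \<Rightarrow> 'x).
        (\<Sum>i<n. \<Sum>j<n. c i * c j * k (x i) (x j)) \<ge> 0)"

definition Nnorm :: "'x measure \<Rightarrow> ('x \<Rightarrow> 'x \<Rightarrow> real) \<Rightarrow> real" where
  "Nnorm mu j = (\<integral>y. (\<integral>x. (j x y)\<^sup>2 \<partial>mu) \<partial>mu)"

definition kbar :: "'g measure \<Rightarrow> ('g \<Rightarrow> 'x \<Rightarrow> 'x) \<Rightarrow> ('x \<Rightarrow> 'x \<Rightarrow> real) \<Rightarrow> 'x \<Rightarrow> 'x \<Rightarrow> real" where
  "kbar lam act k x y = (\<integral>g. k x (act g y) \<partial>lam)"

definition kperp :: "'g measure \<Rightarrow> ('g \<Rightarrow> 'x \<Rightarrow> 'x) \<Rightarrow> ('x \<Rightarrow> 'x \<Rightarrow> real) \<Rightarrow> 'x \<Rightarrow> 'x \<Rightarrow> real" where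
  "kperp lam act k x y = k x y - kbar lam act k x y"

end

theory Submission
  imports Defs
begin

text \<open>Averaging over the group is an orthogonal projection in \<open>L\<^sup>2(\<mu> \<otimes> \<mu>)\<close>.
The Haar probability measure is also right-invariant: its image under inversion is
right-invariant, and by Fubini a left-invariant and a right-invariant probability measure
coincide. Hence \<open>kbar(x, g y) = kbar(x, y)\<close>, and writing \<open>kbar(x, y)\<^sup>2\<close> as the group average
of \<open>k(x, g y) kbar(x, g y)\<close>, Fubini and the invariance of \<open>\<mu>\<close> give
\<open>\<integral>\<integral> k kbar = \<integral>\<integral> kbar\<^sup>2\<close>. So \<open>kperp = k - kbar\<close> is orthogonal to \<open>kbar\<close>, and the identity is
Pythagoras' theorem.\<close>

lemma borel_measurable_uminus_topological_group[measurable]: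
  "(uminus :: 'g::topological_group_add \<Rightarrow> 'g) \<in> borel_measurable borel"
  by (intro borel_measurable_continuous_onI continuous_intros)

lemma haar_prob_left_translation:
  assumes "haar_prob lam"
  shows "distr lam lam ((+) a) = lam"
proof (rule measure_eqI)
  have sets: "sets lam = sets borel"
    and invariant: "\<And>A. A \<in> sets borel \<Longrightarrow> emeasure lam ((+) (- a) ` A) = emeasure lam A"
    using assms unfolding haar_prob_def by auto
  have translation_measurable: "(+) a \<in> measurable lam lam"
    unfolding measurable_cong_sets[OF sets sets]
    by (intro borel_measurable_continuous_onI continuous_intros)
  fix A assume "A \<in> sets (distr lam lam ((+) a))"
  then have A: "A \<in> sets borel" using sets by simp
  have "(+) a -` A \<inter> space lam = (+) (- a) ` A"
    using sets_eq_imp_space_eq[OF sets] by (force simp: add.assoc[symmetric] image_iff)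
  then show "emeasure (distr lam lam ((+) a)) A = emeasure lam A"
    using A sets by (simp add: emeasure_distr[OF translation_measurable] invariant)
qed simp

lemma left_right_invariant_prob_eq:
  fixes lam nu :: "'g::{topological_group_add, second_countable_topology} measure"
  assumes sets_lam: "sets lam = sets borel" and sets_nu: "sets nu = sets borel"
    and "prob_space lam" "prob_space nu"
    and left: "\<And>a. distr lam lam ((+) a) = lam"
    and right: "\<And>b. distr nu nu (\<lambda>h. h + b) = nu"
  shows "lam = nu"
proof (rule measure_eqI)
  interpret lam: prob_space lam by fact
  interpret nu: prob_space nu by fact
  interpret pair_sigma_finite nu lam ..
  note [measurable_cong] = sets_lam sets_nu
  fix A assume "A \<in> sets lam"
  then have [measurable]: "A \<in> sets borel" using sets_lam by simp
  have translate_left: "emeasure lam A = (\<integral>\<^sup>+g. indicator A (h + g) \<partial>lam)" for h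
  proof -
    have "emeasure lam A = (\<integral>\<^sup>+g. indicator A g \<partial>distr lam lam ((+) h))"
      by (simp add: left sets_lam)
    also have "\<dots> = (\<integral>\<^sup>+g. indicator A (h + g) \<partial>lam)"
      by (rule nn_integral_distr) measurable
    finally show ?thesis .
  qed
  have translate_right: "emeasure nu A = (\<integral>\<^sup>+h. indicator A (h + g) \<partial>nu)" for g
  proof -
    have "emeasure nu A = (\<integral>\<^sup>+h. indicator A h \<partial>distr nu nu (\<lambda>h. h + g))"
      by (simp add: right sets_nu)
    also have "\<dots> = (\<integral>\<^sup>+h. indicator A (h + g) \<partial>nu)"
      by (rule nn_integral_distr) measurable
    finally show ?thesis .
  qed
  have "emeasure lam A = (\<integral>\<^sup>+h. (\<integral>\<^sup>+g. indicator A (h + g) \<partial>lam) \<partial>nu)"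
    by (simp add: translate_left[symmetric] nu.emeasure_space_1)
  also have "\<dots> = (\<integral>\<^sup>+g. (\<integral>\<^sup>+h. indicator A (h + g) \<partial>nu) \<partial>lam)"
    by (rule Fubini'[symmetric]) measurable
  also have "\<dots> = emeasure nu A"
    by (simp add: translate_right[symmetric] lam.emeasure_space_1)
  finally show "emeasure lam A = emeasure nu A" .
qed (simp add: sets_lam sets_nu)

lemma haar_prob_right_translation:
  fixes lam :: "'g::{topological_group_add, second_countable_topology} measure"
  assumes haar: "haar_prob lam"
  shows "distr lam lam (\<lambda>h. h + b) = lam"
proof -
  have sets: "sets lam = sets borel" and prob: "prob_space lam"
    using haar unfolding haar_prob_def by auto
  note [measurable_cong] = sets
  define nu where "nu = distr lam lam uminus"
  have right: "distr nu nu (\<lambda>h. h + b) = nu" for b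
  proof -
    have "distr nu nu (\<lambda>h. h + b) = distr nu lam (\<lambda>h. h + b)"
      by (rule distr_cong) (simp_all add: nu_def)
    also have "\<dots> = distr lam lam (\<lambda>h. - h + b)"
      unfolding nu_def by (subst distr_distr) (auto simp: comp_def)
    also have "\<dots> = distr (distr lam lam ((+) (- b))) lam uminus"
      by (subst distr_distr) (auto simp: comp_def minus_add)
    also have "\<dots> = nu"
      unfolding nu_def haar_prob_left_translation[OF haar] ..
    finally show ?thesis .
  qed
  have "lam = nu"
  proof (rule left_right_invariant_prob_eq)
    show "prob_space nu"
      unfolding nu_def by (rule prob_space.prob_space_distr[OF prob]) measurable
  qed (use haar_prob_left_translation[OF haar] right sets in \<open>simp_all add: nu_def prob\<close>)
  with right show ?thesis by simp
qed

lemma pd_kernel_abs_le: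
  assumes pd: "pd_kernel k" and diag: "\<And>x. k x x \<le> C"
  shows "\<bar>k x y\<bar> \<le> C"
proof -
  have symmetric: "k y x = k x y"
    using pd unfolding pd_kernel_def by auto
  have quadratic_form_nonneg: "0 \<le> k x x + 2 * s * k x y + s * s * k y y" for s :: real
  proof -
    define c :: "nat \<Rightarrow> real" where "c i = (if i = 0 then 1 else s)" for i
    define z where "z i = (if i = 0 then x else y)" for i :: nat
    have "0 \<le> (\<Sum>i<2. \<Sum>j<2. c i * c j * k (z i) (z j))"
      using pd unfolding pd_kernel_def by blast
    also have "\<dots> = k x x + 2 * s * k x y + s * s * k y y"
      by (simp add: c_def z_def numeral_2_eq_2 lessThan_Suc symmetric algebra_simps)
    finally show ?thesis .
  qed
  show ?thesis
    using quadratic_form_nonneg[of 1] quadratic_form_nonneg[of "-1"] diag[of x] diag[of y] by auto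
qed

lemma abs_mult_le_mult: "\<bar>a\<bar> \<le> c \<Longrightarrow> \<bar>b\<bar> \<le> d \<Longrightarrow> \<bar>a * b\<bar> \<le> c * d" for a b c d :: real
  by (simp add: abs_mult mult_mono')

lemma (in finite_measure) integrable_bounded:
  fixes f :: "'a \<Rightarrow> real"
  assumes "f \<in> borel_measurable M" and "\<And>x. \<bar>f x\<bar> \<le> c"
  shows "integrable M f"
  using assms by (intro integrable_const_bound[where B = c]) auto

lemma (in finite_measure) integral_square_orthogonal_split:
  fixes f g :: "'a \<Rightarrow> real"
  assumes [measurable]: "f \<in> borel_measurable M" "g \<in> borel_measurable M"
    and f_bounded: "\<And>x. \<bar>f x\<bar> \<le> c" and g_bounded: "\<And>x. \<bar>g x\<bar> \<le> c"
    and orthogonal: "(\<integral>x. f x * g x \<partial>M) = (\<integral>x. (g x)\<^sup>2 \<partial>M)"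
  shows "(\<integral>x. (f x)\<^sup>2 \<partial>M) = (\<integral>x. (g x)\<^sup>2 \<partial>M) + (\<integral>x. (f x - g x)\<^sup>2 \<partial>M)"
proof -
  have [simp]: "integrable M (\<lambda>x. (f x)\<^sup>2)" "integrable M (\<lambda>x. (g x)\<^sup>2)"
    "integrable M (\<lambda>x. f x * g x)"
    unfolding power2_eq_square
    by (intro integrable_bounded[where c = "c * c"] abs_mult_le_mult f_bounded g_bounded; simp)+
  have "(\<integral>x. (f x - g x)\<^sup>2 \<partial>M) = (\<integral>x. (f x)\<^sup>2 \<partial>M) - 2 * (\<integral>x. f x * g x \<partial>M) + (\<integral>x. (g x)\<^sup>2 \<partial>M)"
    by (simp add: power2_diff mult.assoc)
  with orthogonal show ?thesis by simp
qed

lemma Nnorm_eq_integral_pair: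
  fixes j :: "'x \<Rightarrow> 'x \<Rightarrow> real"
  assumes "finite_measure mu"
    and "(\<lambda>(x, y). j x y) \<in> borel_measurable (mu \<Otimes>\<^sub>M mu)" and j_bounded: "\<And>x y. \<bar>j x y\<bar> \<le> c"
  shows "Nnorm mu j = (\<integral>z. (case_prod j z)\<^sup>2 \<partial>(mu \<Otimes>\<^sub>M mu))"
proof -
  interpret finite_measure mu by fact
  interpret pair_sigma_finite mu mu ..
  interpret mumu: finite_measure "mu \<Otimes>\<^sub>M mu"
    by (intro finite_measure_pair_measure) fact+
  have "integrable (mu \<Otimes>\<^sub>M mu) (\<lambda>(x, y). (j x y)\<^sup>2)"
  proof (rule mumu.integrable_bounded)
    show "\<bar>case z of (x, y) \<Rightarrow> (j x y)\<^sup>2\<bar> \<le> c * c" for z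
      unfolding power2_eq_square by (cases z) (simp only: case_prod_conv abs_mult_le_mult j_bounded)
  qed (use assms(2) in measurable)
  from integral_snd[OF this] show ?thesis
    by (simp add: Nnorm_def split_beta')
qed

lemma invariant_full_support_prob_distr:
  assumes "measurable_action act" and "invariant_full_support_prob act mu"
  shows "distr mu mu (act g) = mu"
proof (rule measure_eqI)
  have sets: "sets mu = sets borel"
    and invariant: "\<And>A. A \<in> sets borel \<Longrightarrow> emeasure mu (act g -` A) = emeasure mu A"
    using assms(2) unfolding invariant_full_support_prob_def by auto
  note [measurable_cong] = sets
  have [measurable]: "(\<lambda>(g, x). act g x) \<in> measurable (borel \<Otimes>\<^sub>M borel) borel"
    using assms(1) by (simp add: measurable_action_def)
  have act_measurable: "act g \<in> measurable mu mu"
    by measurable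
  fix A assume "A \<in> sets (distr mu mu (act g))"
  then show "emeasure (distr mu mu (act g)) A = emeasure mu A"
    using sets sets_eq_imp_space_eq[OF sets] by (simp add: emeasure_distr[OF act_measurable] invariant)
qed simp

locale invariant_bounded_kernel =
  fixes lam :: "'g::{topological_group_add, second_countable_topology} measure"
    and act :: "'g \<Rightarrow> 'x::topological_space \<Rightarrow> 'x"
    and mu :: "'x measure"
    and k :: "'x \<Rightarrow> 'x \<Rightarrow> real"
    and C :: real
  assumes haar: "haar_prob lam"
    and action: "measurable_action act"
    and sets_mu: "sets mu = sets borel"
    and prob_mu: "prob_space mu"
    and mu_invariant: "\<And>g. distr mu mu (act g) = mu"
    and k_measurable: "(\<lambda>(x, y). k x y) \<in> borel_measurable (borel \<Otimes>\<^sub>M borel)"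
    and k_bounded: "\<And>x y. \<bar>k x y\<bar> \<le> C"
begin

lemma sets_lam: "sets lam = sets borel"
  using haar by (simp add: haar_prob_def)

lemma act_add: "act (g + h) x = act g (act h x)"
  using action by (simp add: measurable_action_def)

lemma act_measurable: "(\<lambda>(g, x). act g x) \<in> measurable (borel \<Otimes>\<^sub>M borel) borel"
  using action by (simp add: measurable_action_def)

declare sets_lam[measurable_cong] sets_mu[measurable_cong]
  act_measurable[measurable] k_measurable[measurable]

sublocale lam: prob_space lam
  using haar by (simp add: haar_prob_def)

sublocale mu: prob_space mu
  by (fact prob_mu)

sublocale mu_mu: prob_space "mu \<Otimes>\<^sub>M mu"
  by (intro prob_space_pair prob_mu)

sublocale mu_mu_lam: pair_sigma_finite "mu \<Otimes>\<^sub>M mu" lam ..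

lemma kbar_measurable[measurable]:
  "(\<lambda>(x, y). kbar lam act k x y) \<in> borel_measurable (borel \<Otimes>\<^sub>M borel)"
  unfolding kbar_def by measurable

lemma kbar_bounded: "\<bar>kbar lam act k x y\<bar> \<le> C"
proof -
  have "\<bar>kbar lam act k x y\<bar> \<le> (\<integral>g. \<bar>k x (act g y)\<bar> \<partial>lam)"
    unfolding kbar_def by (rule integral_abs_bound)
  also have "\<dots> \<le> (\<integral>g. C \<partial>lam)"
    using order_trans[OF abs_ge_zero k_bounded]
    by (intro integral_mono lam.integrable_bounded[where c = C]) (auto simp: k_bounded)
  also have "\<dots> = C"
    by (simp add: lam.prob_space)
  finally show ?thesis .
qed

lemma kbar_act_invariant: "kbar lam act k x (act g y) = kbar lam act k x y"
proof -
  have "kbar lam act k x (act g y) = (\<integral>h. k x (act (h + g) y) \<partial>lam)"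
    by (simp add: kbar_def act_add)
  also have "\<dots> = (\<integral>h. k x (act h y) \<partial>distr lam lam (\<lambda>h. h + g))"
    by (rule integral_distr[symmetric]) measurable
  also have "\<dots> = kbar lam act k x y"
    by (simp add: kbar_def haar_prob_right_translation[OF haar])
  finally show ?thesis .
qed

lemma distr_pair_act_snd: "distr (mu \<Otimes>\<^sub>M mu) (mu \<Otimes>\<^sub>M mu) (\<lambda>(x, y). (x, act g y)) = mu \<Otimes>\<^sub>M mu"
  using pair_measure_distr[of "\<lambda>x. x" mu mu "act g" mu mu] mu_invariant[of g]
  by (simp add: mu.sigma_finite_measure_axioms)

lemma integral_k_mult_kbar:
  "integral\<^sup>L (mu \<Otimes>\<^sub>M mu) (\<lambda>(x, y). k x y * kbar lam act k x y) =
   integral\<^sup>L (mu \<Otimes>\<^sub>M mu) (\<lambda>(x, y). (kbar lam act k x y)\<^sup>2)"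
proof -
  define F where "F x y = k x y * kbar lam act k x y" for x y
  have [measurable]: "(\<lambda>(x, y). F x y) \<in> borel_measurable (borel \<Otimes>\<^sub>M borel)"
    unfolding F_def by measurable
  have square_as_average: "(kbar lam act k x y)\<^sup>2 = (\<integral>g. F x (act g y) \<partial>lam)" for x y
  proof -
    have "(\<integral>g. F x (act g y) \<partial>lam) = (\<integral>g. k x (act g y) \<partial>lam) * kbar lam act k x y"
      by (simp add: F_def kbar_act_invariant)
    then show ?thesis
      by (simp add: kbar_def power2_eq_square)
  qed
  have "integral\<^sup>L (mu \<Otimes>\<^sub>M mu) (\<lambda>(x, y). (kbar lam act k x y)\<^sup>2) =
      (\<integral>z. (\<integral>g. (case z of (x, y) \<Rightarrow> F x (act g y)) \<partial>lam) \<partial>(mu \<Otimes>\<^sub>M mu))"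
    by (rule Bochner_Integration.integral_cong) (auto simp: square_as_average)
  also have "\<dots> = (\<integral>g. (\<integral>(x, y). F x (act g y) \<partial>(mu \<Otimes>\<^sub>M mu)) \<partial>lam)"
  proof (rule mu_mu_lam.Fubini_integral[symmetric])
    show "integrable ((mu \<Otimes>\<^sub>M mu) \<Otimes>\<^sub>M lam) (\<lambda>(z, g). case z of (x, y) \<Rightarrow> F x (act g y))"
      by (intro finite_measure.integrable_bounded[where c = "C * C"] finite_measure_pair_measure
          mu_mu.finite_measure_axioms lam.finite_measure_axioms)
        (measurable, auto simp: F_def intro: abs_mult_le_mult k_bounded kbar_bounded)
  qed
  also have "\<dots> = (\<integral>g. (\<integral>(x, y). F x y \<partial>(mu \<Otimes>\<^sub>M mu)) \<partial>lam)"
  proof -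
    have "(\<integral>(x, y). F x (act g y) \<partial>(mu \<Otimes>\<^sub>M mu)) = (\<integral>(x, y). F x y \<partial>(mu \<Otimes>\<^sub>M mu))" for g
      by (subst (2) distr_pair_act_snd[of g, symmetric], subst integral_distr) (auto simp: case_prod_beta')
    then show ?thesis by simp
  qed
  also have "\<dots> = integral\<^sup>L (mu \<Otimes>\<^sub>M mu) (\<lambda>(x, y). k x y * kbar lam act k x y)"
    by (simp add: F_def lam.prob_space)
  finally show ?thesis ..
qed

theorem Nnorm_eq_Nnorm_kbar_plus_Nnorm_kperp: "Nnorm mu k = Nnorm mu (kbar lam act k) + Nnorm mu (kperp lam act k)"
proof -
  have kperp_bounded: "\<bar>kperp lam act k x y\<bar> \<le> C + C" for x y
    using k_bounded[of x y] kbar_bounded[of x y] by (simp add: kperp_def)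
  have [measurable]: "case_prod (kperp lam act k) \<in> borel_measurable (borel \<Otimes>\<^sub>M borel)"
    unfolding kperp_def by measurable
  have "Nnorm mu k = (\<integral>z. (case_prod k z)\<^sup>2 \<partial>(mu \<Otimes>\<^sub>M mu))"
    by (rule Nnorm_eq_integral_pair[OF mu.finite_measure_axioms _ k_bounded]) measurable
  also have "\<dots> =
      (\<integral>z. (case_prod (kbar lam act k) z)\<^sup>2 \<partial>(mu \<Otimes>\<^sub>M mu)) +
      (\<integral>z. (case_prod k z - case_prod (kbar lam act k) z)\<^sup>2 \<partial>(mu \<Otimes>\<^sub>M mu))"
    using integral_k_mult_kbar
    by (intro mu_mu.integral_square_orthogonal_split[where c = C])
      (measurable, auto simp: k_bounded kbar_bounded split_beta')
  also have "\<dots> = Nnorm mu (kbar lam act k) + Nnorm mu (kperp lam act k)"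
  proof -
    have "Nnorm mu (kbar lam act k) = (\<integral>z. (case_prod (kbar lam act k) z)\<^sup>2 \<partial>(mu \<Otimes>\<^sub>M mu))"
      by (rule Nnorm_eq_integral_pair[OF mu.finite_measure_axioms _ kbar_bounded]) measurable
    moreover have "Nnorm mu (kperp lam act k) =
        (\<integral>z. (case_prod k z - case_prod (kbar lam act k) z)\<^sup>2 \<partial>(mu \<Otimes>\<^sub>M mu))"
      by (subst Nnorm_eq_integral_pair[OF mu.finite_measure_axioms _ kperp_bounded])
        (measurable, simp add: kperp_def split_beta')
    ultimately show ?thesis by simp
  qed
  finally show ?thesis .
qed

end

theorem lemma5p10:
  fixes lam :: "'g::{topological_group_add, t2_space, second_countable_topology} measure"
    and act :: "'g \<Rightarrow> 'x::polish_space \<Rightarrow> 'x"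
    and mu :: "'x measure"
    and k :: "'x \<Rightarrow> 'x \<Rightarrow> real"
  assumes "compact_group TYPE('g)"
    and "haar_prob lam"
    and "measurable_action act"
    and "invariant_full_support_prob act mu"
    and "(\<lambda>(x, y). k x y) \<in> borel_measurable (borel \<Otimes>\<^sub>M borel)"
    and "pd_kernel k"
    and "\<And>x. continuous_on UNIV (\<lambda>y. k y x)"
    and "\<exists>C. \<forall>x. k x x \<le> C"
  shows "Nnorm mu k = Nnorm mu (kbar lam act k) + Nnorm mu (kperp lam act k)"
proof -
  obtain C where "\<And>x. k x x \<le> C"
    using assms(8) by blast
  then have k_bounded: "\<And>x y. \<bar>k x y\<bar> \<le> C"
    using pd_kernel_abs_le[OF assms(6)] by blast
  have sets_mu: "sets mu = sets borel" and prob_mu: "prob_space mu"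
    using assms(4) by (simp_all add: invariant_full_support_prob_def)
  interpret invariant_bounded_kernel lam act mu k C
    by (intro invariant_bounded_kernel.intro assms(2,3,5) sets_mu prob_mu k_bounded
        invariant_full_support_prob_distr[OF assms(3,4)])
  show ?thesis
    by (fact Nnorm_eq_Nnorm_kbar_plus_Nnorm_kperp)
qed

end
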